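(* For $\tau\in\mathbb{R}$ and integer $n\ge0$ let $$\mu_{2n}(\tau;\tfrac13)=\int_{-\infty}^{\infty}x^{2n}\exp\left\{-\left(x^6-\tau x^4+\tfrac13\tau^2x^2\right)\right\}dx.$$ Then \begin{align*} \mu_{2n}(\tau;\tfrac13)=\Bigg\{&\tfrac13\Gamma\!\left(\tfrac13n+\tfrac16\right){}_2F_2\!\left(\tfrac16-\tfrac13n,\tfrac12-\tfrac13n;\tfrac13,\tfrac23;\tfrac{\tau^3}{27}\right)+\tfrac13\tau\Gamma\!\left(\tfrac13n+\tfrac56\right){}_2F_2\!\left(\tfrac12-\tfrac13n,\tfrac56-\tfrac13n;\tfrac23,\tfrac43;\tfrac{\tau^3}{27}\right)\\ &+\frac{(2n-1)\tau^2}{36}\Gamma\!\left(\tfrac13n+\tfrac12\right){}_2F_2\!\left(\tfrac56-\tfrac13n,\tfrac76-\tfrac13n;\tfrac43,\tfrac53;\tfrac{\tau^3}{27}\right)\Bigg\}\exp\left(-\frac{\tau^3}{27}\right). \end{align*}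
   Context: ${}_2F_2(a_1,a_2;b_1,b_2;z)$ denotes the generalised hypergeometric function with upper parameters $a_1,a_2$ and lower parameters $b_1,b_2$. *)

theory Defs
  imports "HOL-Analysis.Analysis"
begin

definition hyp2F2 :: "real \<Rightarrow> real \<Rightarrow> real \<Rightarrow> real \<Rightarrow> real \<Rightarrow> real" where
  "hyp2F2 a1 a2 b1 b2 z =
     (\<Sum>k. pochhammer a1 k * pochhammer a2 k / (pochhammer b1 k * pochhammer b2 k)
            * z ^ k / fact k)"

end

theory Submission
  imports Defs
begin

text \<open>
  Both sides are power series in \<tau>, and we compare coefficients. Expanding
  exp (\<tau> x^4 - \<tau>^2 x^2 / 3) in \<tau> under the integral (dominated convergence: x^6 beats the
  rest of the exponent) turns the left-hand side into a power series Phi_n. As the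
  \<tau>-derivative of the exponent is x^4 - 2 \<tau> x^2 / 3, these satisfy
  Phi_n' = Phi_(n+2) - (2/3) \<tau> Phi_(n+1), and a family of power series obeying this system
  is determined by its constant terms Phi_n(0) = Gamma ((2n+1)/6) / 3.

  The bracket on the right-hand side is a power series R_\<nu>, \<nu> = n + 1/2, with explicit
  Gamma-Pochhammer coefficients, which split by residue mod 3 into the three 2F2 series.
  These coefficients satisfy a three-term recurrence saying
  R_\<nu>' = R_(\<nu>+2) - (2/3) \<tau> R_(\<nu>+1) + (1/9) \<tau>^2 R_\<nu>. The factor exp (- \<tau>^3 / 27) absorbs
  the last term, so exp (- \<tau>^3 / 27) R_\<nu> solves the same system with the same constant terms.
\<close>


section \<open>Moments of exp (- c x^6)\<close>

lemma Gamma_integral_real':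
  assumes "s > (0::real)"
  shows "((\<lambda>t. t powr (s - 1) / exp t) has_integral Gamma s) {0<..}"
proof -
  have "((\<lambda>t. if t \<in> {0<..} then t powr (s - 1) / exp t else 0) has_integral Gamma s) {0..}"
    by (rule has_integral_spike [of "{0}", rotated 2, OF Gamma_integral_real[OF assms]]) auto
  then show ?thesis
    by (subst (asm) has_integral_restrict) auto
qed

lemma powr_sextic_substitution:
  fixes c x :: real and m :: nat
  assumes c: "c > 0" and x: "x > 0"
  defines "s \<equiv> (2 * real m + 1) / 6"
  shows "c * x^5 * (c * x^6) powr (s - 1) = c powr s * x^(2*m)"
proof -
  have "(x^6) powr (s - 1) = (x powr real 6) powr (s - 1)"
    using x by (simp only: powr_realpow)
  also have "\<dots> = x powr (real (2*m) - 5)"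
    unfolding powr_powr by (rule arg_cong[where f="(powr) x"]) (simp add: s_def field_simps)
  also have "\<dots> = x powr (real (2*m)) / x powr (real 5)"
    by (simp add: powr_diff)
  also have "\<dots> = x^(2*m) / x^5"
    using x by (simp only: powr_realpow)
  finally have "c * x^5 * (c * x^6) powr (s - 1) = (c * c powr (s - 1)) * x^(2*m)"
    using c x by (simp add: powr_mult)
  also have "c * c powr (s - 1) = c powr s"
    using c powr_add[of c 1 "s - 1"] by simp
  finally show ?thesis .
qed

lemma image_scaled_sextic_pos:
  fixes c :: real
  assumes c: "c > 0"
  shows "(\<lambda>x. c * x^6) ` {0<..} = {0<..}"
proof (intro equalityI subsetI)
  fix t :: real assume t: "t \<in> {0<..}"
  then have "((t / c) powr (1/6))^6 = t / c"
    using c by (subst powr_power) auto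
  with c t have "t = c * ((t / c) powr (1/6))^6" "(t / c) powr (1/6) > 0"
    by simp_all
  then show "t \<in> (\<lambda>x. c * x^6) ` {0<..}" by blast
qed (use c in auto)

lemma has_integral_power_exp_neg_sextic_pos:
  fixes c :: real and m :: nat
  assumes c: "c > 0"
  defines "s \<equiv> (2 * real m + 1) / 6"
  shows "(\<lambda>x. x^(2*m) * exp (- c * x^6)) absolutely_integrable_on {0<..}"
    and "((\<lambda>x. x^(2*m) * exp (- c * x^6)) has_integral Gamma s * c powr (- s) / 6) {0<..}"
proof -
  define f where "f t = c powr (- s) / 6 * (t powr (s - 1) / exp t)" for t
  define g where "g x = c * x^6" for x :: real
  have "(f has_integral Gamma s * c powr (- s) / 6) {0<..}"
    unfolding f_def using has_integral_mult_right[OF Gamma_integral_real', of s "c powr (- s) / 6"]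
    by (simp add: s_def mult_ac)
  then have f: "f absolutely_integrable_on {0<..} \<and> integral {0<..} f = Gamma s * c powr (- s) / 6"
    by (auto intro!: nonnegative_absolutely_integrable_1
        simp: f_def integral_unique has_integral_integrable)
  have "g ` {0<..} = {0<..}"
    unfolding g_def by (rule image_scaled_sextic_pos[OF c])
  moreover have "inj_on g {0<..}"
    using c by (auto simp: g_def inj_on_def power_eq_iff_eq_base)
  moreover have "(g has_field_derivative 6 * c * x^5) (at x within {0<..})" for x
    unfolding g_def by (auto intro!: derivative_eq_intros)
  ultimately have pulled_back: "(\<lambda>x. \<bar>6 * c * x^5\<bar> * f (g x)) absolutely_integrable_on {0<..}
      \<and> integral {0<..} (\<lambda>x. \<bar>6 * c * x^5\<bar> * f (g x)) = Gamma s * c powr (- s) / 6"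
    using f by (subst has_absolute_integral_change_of_variables_1') auto
  have pullback: "\<bar>6 * c * x^5\<bar> * f (g x) = x^(2*m) * exp (- c * x^6)" if "x \<in> {0<..}" for x
  proof -
    have "\<bar>6 * c * x^5\<bar> * f (g x)
        = c powr (- s) * (c * x^5 * (c * x^6) powr (s - 1)) / exp (c * x^6)"
      using c that by (simp add: f_def g_def)
    also have "\<dots> = (c powr (- s) * c powr s) * x^(2*m) / exp (c * x^6)"
      using c that by (simp add: powr_sextic_substitution s_def)
    also have "c powr (- s) * c powr s = 1"
      using c by (simp add: powr_minus)
    finally show ?thesis by (simp add: exp_minus divide_inverse)
  qed
  have "(\<lambda>x. \<bar>6 * c * x^5\<bar> * f (g x)) absolutely_integrable_on {0<..}
      \<longleftrightarrow> (\<lambda>x. x^(2*m) * exp (- c * x^6)) absolutely_integrable_on {0<..}"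
    by (rule set_integrable_cong) (simp_all only: pullback)
  moreover have "integral {0<..} (\<lambda>x. \<bar>6 * c * x^5\<bar> * f (g x))
      = integral {0<..} (\<lambda>x. x^(2*m) * exp (- c * x^6))"
    by (rule integral_cong) (rule pullback)
  ultimately show "(\<lambda>x. x^(2*m) * exp (- c * x^6)) absolutely_integrable_on {0<..}"
    and "((\<lambda>x. x^(2*m) * exp (- c * x^6)) has_integral Gamma s * c powr (- s) / 6) {0<..}"
    using pulled_back set_lebesgue_integral_eq_integral(1) has_integral_integral by metis+
qed

lemma has_integral_UNIV_even:
  fixes f :: "real \<Rightarrow> real"
  assumes even: "\<And>x. f (- x) = f x"
    and abs_int: "f absolutely_integrable_on {0<..}" and pos: "(f has_integral I) {0<..}"
  shows "(f has_integral 2 * I) UNIV"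
proof -
  have "inj_on uminus {..<0::real}" by simp
  moreover have "uminus ` {..<0::real} = {0<..}" by force
  ultimately have "(\<lambda>x. \<bar>-1\<bar> * f (- x)) absolutely_integrable_on {..<0}
      \<and> integral {..<0} (\<lambda>x. \<bar>-1\<bar> * f (- x)) = I"
    using abs_int integral_unique[OF pos]
    by (subst has_absolute_integral_change_of_variables_1') (auto intro!: derivative_eq_intros)
  then have neg: "(f has_integral I) {..<0}"
    using even set_lebesgue_integral_eq_integral(1) has_integral_integral by fastforce
  have "{..<0} \<inter> {0<..} = ({} :: real set)" by auto
  then have "(f has_integral I + I) ({..<0} \<union> {0<..})"
    by (intro has_integral_Un[OF neg pos]) simp
  moreover have "negligible {x \<in> UNIV - ({..<0} \<union> {0<..}). f x \<noteq> 0}"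
    by (rule negligible_subset [of "{0}"]) auto
  ultimately show ?thesis
    by (subst has_integral_spike_set_eq [where T = "{..<0} \<union> {0<..}"]) auto
qed

lemma has_integral_power_exp_neg_sextic:
  fixes c :: real and m :: nat
  assumes "c > 0"
  defines "s \<equiv> (2 * real m + 1) / 6"
  shows "((\<lambda>x. x^(2*m) * exp (- c * x^6)) has_integral Gamma s * c powr (- s) / 3) UNIV"
  using has_integral_UNIV_even[OF _ has_integral_power_exp_neg_sextic_pos[OF assms(1)]]
  by (simp add: s_def)

section \<open>Power series\<close>

lemma sums_residue_class:
  assumes r: "r < k" and zero: "\<And>m. m mod k \<noteq> r \<Longrightarrow> f m = 0"
    and sums: "(\<lambda>l. f (k * l + r)) sums s"
  shows "f sums s"
proof -
  have "strict_mono (\<lambda>l. k * l + r)"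
    using r by (auto simp: strict_mono_def)
  moreover have "f m = 0" if "m \<notin> range (\<lambda>l. k * l + r)" for m
    using that zero[of m] mult_div_mod_eq[of k m] by (metis rangeI)
  ultimately show ?thesis
    using sums_mono_reindex sums by blast
qed

lemma sums_mod3:
  fixes f :: "nat \<Rightarrow> 'a::real_normed_vector"
  assumes "(\<lambda>k. f (3 * k)) sums a" "(\<lambda>k. f (3 * k + 1)) sums b" "(\<lambda>k. f (3 * k + 2)) sums c"
  shows "f sums (a + b + c)"
proof -
  define g where "g r m = (if m mod 3 = r then f m else 0)" for r m
  have "g r sums s" if "r < 3" "(\<lambda>k. f (3 * k + r)) sums s" for r s
    by (rule sums_residue_class[of r 3]) (use that in \<open>auto simp: g_def\<close>)
  then have "(\<lambda>m. g 0 m + g 1 m + g 2 m) sums (a + b + c)"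
    using assms by (intro sums_add) auto
  moreover have "g 0 m + g 1 m + g 2 m = f m" for m
    using mod_less_divisor[of 3 m] by (auto simp: g_def)
  ultimately show ?thesis by simp
qed

lemma fps_mult_nth_times_power:
  fixes f g :: "'a::comm_ring_1 fps"
  shows "fps_nth (f * g) n * z^n = (\<Sum>i\<le>n. (fps_nth f i * z^i) * (fps_nth g (n - i) * z^(n - i)))"
  unfolding fps_mult_nth atLeast0AtMost sum_distrib_right
proof (rule sum.cong)
  fix i assume "i \<in> {..n}"
  then have "z^n = z^i * z^(n - i)" by (simp flip: power_add)
  then show "fps_nth f i * fps_nth g (n - i) * z^n
      = fps_nth f i * z^i * (fps_nth g (n - i) * z^(n - i))"
    by (simp add: mult_ac)
qed simp

lemma sums_fps_mult:
  fixes f g :: "'a::{real_normed_field,banach} fps"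
  assumes "summable (\<lambda>n. norm (fps_nth f n * z^n))" "summable (\<lambda>n. norm (fps_nth g n * z^n))"
  shows "(\<lambda>n. fps_nth (f * g) n * z^n) sums ((\<Sum>n. fps_nth f n * z^n) * (\<Sum>n. fps_nth g n * z^n))"
  using Cauchy_product_sums[OF assms] by (simp add: fps_mult_nth_times_power)

lemma norm_sum_fps_mult_le:
  fixes f g :: "'a::{real_normed_field,banach} fps"
  assumes "summable (\<lambda>n. norm (fps_nth f n * z^n))" "summable (\<lambda>n. norm (fps_nth g n * z^n))"
    and "finite P"
  shows "norm (\<Sum>n\<in>P. fps_nth (f * g) n * z^n)
    \<le> (\<Sum>n. norm (fps_nth f n * z^n)) * (\<Sum>n. norm (fps_nth g n * z^n))"
proof -
  define F G where "F = Abs_fps (\<lambda>n. norm (fps_nth f n * z^n))"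
    and "G = Abs_fps (\<lambda>n. norm (fps_nth g n * z^n))"
  have FG: "(\<lambda>n. fps_nth (F * G) n * 1^n) sums ((\<Sum>n. fps_nth F n * 1^n) * (\<Sum>n. fps_nth G n * 1^n))"
    by (rule sums_fps_mult) (use assms in \<open>simp_all add: F_def G_def\<close>)
  have "norm (fps_nth (f * g) n * z^n) \<le> fps_nth (F * G) n" for n
    unfolding fps_mult_nth_times_power
    by (simp add: F_def G_def fps_mult_nth atLeast0AtMost flip: norm_mult) (rule norm_sum)
  then have "norm (\<Sum>n\<in>P. fps_nth (f * g) n * z^n) \<le> (\<Sum>n\<in>P. fps_nth (F * G) n)"
    by (intro order_trans[OF norm_sum] sum_mono)
  also have "\<dots> \<le> (\<Sum>n. fps_nth (F * G) n)"
    using FG \<open>finite P\<close>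
    by (intro sum_le_suminf) (auto simp: sums_iff F_def G_def fps_mult_nth intro!: sum_nonneg)
  also have "\<dots> = (\<Sum>n. norm (fps_nth f n * z^n)) * (\<Sum>n. norm (fps_nth g n * z^n))"
    using FG by (simp add: sums_iff F_def G_def)
  finally show ?thesis .
qed

lemma fps_family_eqI:
  fixes F H :: "nat \<Rightarrow> 'a::field_char_0 fps"
  assumes F: "\<And>n. fps_deriv (F n) = F (n + 2) - fps_const c * (fps_X * F (n + 1))"
    and H: "\<And>n. fps_deriv (H n) = H (n + 2) - fps_const c * (fps_X * H (n + 1))"
    and const: "\<And>n. fps_nth (F n) 0 = fps_nth (H n) 0"
  shows "F = H"
proof -
  have "fps_nth (F n) p = fps_nth (H n) p" for n p
  proof (induction p arbitrary: n rule: less_induct)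
    case (less p)
    show ?case
    proof (cases p)
      case 0
      with const show ?thesis by simp
    next
      case (Suc q)
      have "fps_nth (fps_deriv (F n)) q = fps_nth (fps_deriv (H n)) q"
        using less.IH[of q] less.IH[of "q - 1"] Suc unfolding F H by (cases q) simp_all
      with Suc show ?thesis by (simp del: of_nat_Suc)
    qed
  qed
  then show ?thesis by (auto intro: fps_ext)
qed

lemma fps_nth_fps_exp_compose_X_power:
  assumes "k > 0"
  shows "fps_nth (fps_exp c oo fps_X ^ k) m
    = (if k dvd m then c ^ (m div k) / fact (m div k) else 0)"
proof -
  have "fps_nth (fps_exp c oo fps_X ^ k) m = (\<Sum>i\<in>{0..m}. if m = k * i then c ^ i / fact i else 0)"
    by (simp add: fps_compose_nth power_mult [symmetric] if_distrib cong: if_cong)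
  also have "\<dots> = (if k dvd m then c ^ (m div k) / fact (m div k) else 0)"
  proof (cases "k dvd m")
    case True
    then have "{0..m} \<inter> {i. m = k * i} = {m div k}"
      using assms by (auto elim!: dvdE)
    then show ?thesis
      using True by (simp add: sum.If_cases)
  next
    case False
    then show ?thesis by (auto intro!: sum.neutral)
  qed
  finally show ?thesis .
qed

lemma fps_deriv_fps_exp_compose_X_power:
  fixes c :: "'a::field_char_0"
  assumes "k > 0"
  shows "fps_deriv (fps_exp c oo fps_X ^ k)
    = fps_const (c * of_nat k) * fps_X ^ (k - 1) * (fps_exp c oo fps_X ^ k)"
  using assms
  by (simp add: fps_compose_deriv fps_deriv_power fps_const_mult_apply_left [symmetric] mult_ac)

lemma sums_fps_exp_compose_X_power:
  fixes c z :: real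
  assumes "k > 0"
  shows "(\<lambda>m. fps_nth (fps_exp c oo fps_X ^ k) m * z^m) sums exp (c * z^k)"
proof (rule sums_residue_class[of 0 k])
  have "fps_nth (fps_exp c oo fps_X ^ k) (k * l) * z^(k * l) = (c * z^k)^l / fact l" for l
    using assms by (simp add: fps_nth_fps_exp_compose_X_power power_mult power_mult_distrib)
  then show "(\<lambda>l. fps_nth (fps_exp c oo fps_X ^ k) (k * l + 0) * z^(k * l + 0)) sums exp (c * z^k)"
    using exp_converges[of "c * z^k"] by (simp add: divide_inverse mult.commute)
qed (use assms in \<open>auto simp: fps_nth_fps_exp_compose_X_power dvd_eq_mod_eq_0\<close>)

lemma sums_norm_fps_exp_compose_X_power:
  fixes c z :: real
  assumes "k > 0"
  shows "(\<lambda>m. norm (fps_nth (fps_exp c oo fps_X ^ k) m * z^m)) sums exp (\<bar>c\<bar> * \<bar>z\<bar>^k)"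
proof -
  have "norm (fps_nth (fps_exp c oo fps_X ^ k) m * z^m)
      = fps_nth (fps_exp \<bar>c\<bar> oo fps_X ^ k) m * \<bar>z\<bar>^m" for m
    using assms by (simp add: fps_nth_fps_exp_compose_X_power abs_mult power_abs)
  then show ?thesis
    using sums_fps_exp_compose_X_power[OF assms, of "\<bar>c\<bar>" "\<bar>z\<bar>"] by simp
qed

section \<open>Pochhammer symbols and hypergeometric terms\<close>

lemma pochhammer_minus_2_expand:
  fixes a :: "'a::comm_ring_1"
  shows "pochhammer (a - 2) (k + 2)
    = pochhammer a (k + 2) - 2 * of_nat (k + 2) * pochhammer a (k + 1)
      + of_nat ((k + 2) * (k + 1)) * pochhammer a k"
proof -
  have "pochhammer (a - 2) (2 + k) = (a - 2) * (a - 1) * pochhammer a k"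
    by (simp add: pochhammer_product' pochhammer_rec eval_nat_numeral algebra_simps)
  moreover have "pochhammer a (k + 2) = pochhammer a k * (a + of_nat k) * (a + of_nat k + 1)"
    by (simp add: eval_nat_numeral pochhammer_Suc algebra_simps)
  moreover have "pochhammer a (k + 1) = pochhammer a k * (a + of_nat k)"
    by (simp add: pochhammer_Suc)
  ultimately show ?thesis
    by (simp add: add.commute[of k 2]) (simp add: algebra_simps)
qed

lemma pochhammer_triple:
  fixes a :: "'a::field_char_0"
  shows "pochhammer a (3 * k) = 27 ^ k * pochhammer (a / 3) k * pochhammer ((a + 1) / 3) k
    * pochhammer ((a + 2) / 3) k"
proof (induction k)
  case (Suc k)
  have "pochhammer a (3 * Suc k)
      = pochhammer a (3 * k)
        * ((a + of_nat (3 * k)) * (a + of_nat (3 * k) + 1) * (a + of_nat (3 * k) + 2))"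
    by (simp add: eval_nat_numeral pochhammer_Suc algebra_simps)
  also have "(a + of_nat (3 * k)) * (a + of_nat (3 * k) + 1) * (a + of_nat (3 * k) + 2)
      = 27 * ((a / 3 + of_nat k) * ((a + 1) / 3 + of_nat k) * ((a + 2) / 3 + of_nat k))"
    by (simp add: field_simps)
  finally show ?case
    unfolding Suc.IH by (simp add: pochhammer_Suc mult_ac)
qed simp

lemma pochhammer_triple_reflect:
  fixes w :: "'a::field_char_0"
  shows "pochhammer (3 * (w - of_nat k)) (3 * k)
    = 27 ^ k * pochhammer (w - of_nat k) k * pochhammer (1/3 - w) k * pochhammer (2/3 - w) k"
proof -
  have args: "3 * (w - of_nat k) / 3 = w - of_nat k"
    "(3 * (w - of_nat k) + 1) / 3 = w - of_nat k + 1/3"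
    "(3 * (w - of_nat k) + 2) / 3 = w - of_nat k + 2/3"
    by (simp_all add: field_simps)
  have reflect: "pochhammer (w - of_nat k + 1/3) k = (-1) ^ k * pochhammer (2/3 - w) k"
    "pochhammer (w - of_nat k + 2/3) k = (-1) ^ k * pochhammer (1/3 - w) k"
    using pochhammer_minus'[of "w - 2/3" k] pochhammer_minus'[of "w - 1/3" k]
    by (simp_all add: algebra_simps)
  show ?thesis
    unfolding pochhammer_triple args reflect by (simp add: mult_ac flip: power_mult_distrib)
qed

lemma fact_mult3_add:
  "fact (3 * k + r) = (fact r :: 'a::field_char_0) * 27 ^ k
    * pochhammer ((of_nat r + 1) / 3) k * pochhammer ((of_nat r + 2) / 3) k
    * pochhammer ((of_nat r + 3) / 3) k"
proof -
  have "fact (3 * k + r) = fact r * (pochhammer (1 + of_nat r) (3 * k) :: 'a)"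
    by (simp add: pochhammer_fact pochhammer_product' add.commute)
  moreover have "(1 + of_nat r) / 3 = (of_nat r + 1) / (3::'a)"
    "(1 + of_nat r + 1) / 3 = (of_nat r + 2) / (3::'a)"
    "(1 + of_nat r + 2) / 3 = (of_nat r + 3) / (3::'a)"
    by (simp_all add: add_ac)
  ultimately show ?thesis
    unfolding pochhammer_triple by (simp only: mult_ac)
qed

definition hyp2F2_term :: "real \<Rightarrow> real \<Rightarrow> real \<Rightarrow> real \<Rightarrow> real \<Rightarrow> nat \<Rightarrow> real" where
  "hyp2F2_term a1 a2 b1 b2 z k
     = pochhammer a1 k * pochhammer a2 k / (pochhammer b1 k * pochhammer b2 k) * z ^ k / fact k"

lemma hyp2F2_term_Suc:
  assumes "b1 > 0" "b2 > 0"
  shows "hyp2F2_term a1 a2 b1 b2 z (Suc k)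
    = hyp2F2_term a1 a2 b1 b2 z k * ((a1 + k) * (a2 + k) * z / ((b1 + k) * (b2 + k) * (k + 1)))"
proof -
  have "pochhammer b1 k > 0" "pochhammer b2 k > 0" "b1 + k > 0" "b2 + k > 0"
    using assms by (auto intro: pochhammer_pos)
  then show ?thesis
    unfolding hyp2F2_term_def by (simp add: pochhammer_Suc field_simps)
qed

lemma summable_norm_hyp2F2_term:
  assumes b: "b1 > 0" "b2 > 0"
  shows "summable (\<lambda>k. norm (hyp2F2_term a1 a2 b1 b2 z k))"
proof (rule summable_ratio_test[of "1/2" "nat \<lceil>max (max \<bar>a1\<bar> \<bar>a2\<bar>) (8 * \<bar>z\<bar>)\<rceil>"])
  fix k assume "k \<ge> nat \<lceil>max (max \<bar>a1\<bar> \<bar>a2\<bar>) (8 * \<bar>z\<bar>)\<rceil>"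
  then have "max (max \<bar>a1\<bar> \<bar>a2\<bar>) (8 * \<bar>z\<bar>) \<le> real k"
    by (meson real_nat_ceiling_ge of_nat_le_iff order_trans)
  then have k: "\<bar>a1\<bar> \<le> k" "\<bar>a2\<bar> \<le> k" "8 * \<bar>z\<bar> \<le> k"
    by simp_all
  define q where "q = (a1 + k) * (a2 + k) * z / ((b1 + k) * (b2 + k) * (k + 1))"
  have "\<bar>a1 + k\<bar> \<le> 2 * (b1 + k)" "\<bar>a2 + k\<bar> \<le> 2 * (b2 + k)"
    using k b by (simp_all add: abs_le_iff)
  moreover have "\<bar>q\<bar> = \<bar>a1 + k\<bar> * \<bar>a2 + k\<bar> * \<bar>z\<bar> / ((b1 + k) * (b2 + k) * (k + 1))"
    using b by (simp add: q_def abs_mult abs_divide)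
  ultimately have "\<bar>q\<bar> \<le> (2 * (b1 + k)) * (2 * (b2 + k)) * \<bar>z\<bar> / ((b1 + k) * (b2 + k) * (k + 1))"
    using b by (auto intro!: divide_right_mono mult_right_mono mult_mono)
  also have "\<dots> = 4 * \<bar>z\<bar> / (k + 1)"
  proof -
    have "b1 + real k \<noteq> 0" "b2 + real k \<noteq> 0" using b by simp_all
    then show ?thesis by (simp add: divide_simps) (simp add: algebra_simps)
  qed
  also have "\<dots> \<le> 1/2"
    using k by (simp add: field_simps)
  finally have "\<bar>q\<bar> \<le> 1/2" .
  then show "norm (norm (hyp2F2_term a1 a2 b1 b2 z (Suc k)))
      \<le> 1/2 * norm (norm (hyp2F2_term a1 a2 b1 b2 z k))"
    unfolding hyp2F2_term_Suc[OF b] q_def [symmetric]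
    using mult_left_mono[OF \<open>\<bar>q\<bar> \<le> 1/2\<close>, of "\<bar>hyp2F2_term a1 a2 b1 b2 z k\<bar>"]
    by (simp add: abs_mult)
qed simp

lemma hyp2F2_term_sums:
  assumes "b1 > 0" "b2 > 0"
  shows "hyp2F2_term a1 a2 b1 b2 z sums hyp2F2 a1 a2 b1 b2 z"
  using summable_norm_cancel[OF summable_norm_hyp2F2_term[OF assms]]
  by (simp add: summable_sums hyp2F2_def hyp2F2_term_def [abs_def])

section \<open>The right-hand side as a power series\<close>

lemma shift_div3_notin_nonpos_Ints:
  fixes x :: real
  assumes "x \<notin> \<int>"
  shows "(x - of_nat m) / 3 \<notin> \<int>\<^sub>\<le>\<^sub>0"
proof
  assume "(x - of_nat m) / 3 \<in> \<int>\<^sub>\<le>\<^sub>0"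
  then obtain j where "(x - of_nat m) / 3 = of_int j"
    by (auto elim!: nonpos_Ints_cases)
  then have "x = of_int (3 * j + int m)" by simp
  with assms show False by (metis Ints_of_int)
qed

lemma half_integer_not_Ints: "real n + 1/2 \<notin> \<int>"
proof
  assume "real n + 1/2 \<in> \<int>"
  then obtain j where "real n + 1/2 = of_int j"
    by (auto elim: Ints_cases)
  then have "2 * int n + 1 = 2 * j"
    by (simp add: field_simps flip: of_int_eq_iff)
  then show False by presburger
qed

text \<open>
  The Taylor coefficients in \<tau> of the integral of u^(\<nu> - 1) exp (- (u - \<tau>/3)^3) over u > 0,
  found formally by m integrations by parts. For \<nu> = n + 1/2 the substitution u = x^2 turns
  this integral into exp (\<tau>^3 / 27) \<mu>_2n(\<tau>; 1/3), because
  x^6 - \<tau> x^4 + \<tau>^2 x^2 / 3 = (x^2 - \<tau>/3)^3 + \<tau>^3 / 27.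
\<close>
definition moment_coeff :: "real \<Rightarrow> nat \<Rightarrow> real" where
  "moment_coeff \<nu> m = Gamma ((\<nu> - m) / 3) * pochhammer (\<nu> - m) m / (3 ^ (m + 1) * fact m)"

lemma moment_coeff_Suc:
  assumes "\<nu> \<notin> \<int>"
  shows "(real m + 1) * moment_coeff \<nu> (Suc m)
    = Gamma ((\<nu> - m) / 3 + 2/3) * pochhammer (\<nu> - m) m / (3 ^ (m + 1) * fact m)"
proof -
  define x where "x = \<nu> - Suc m"
  have arg_shift: "x + 1 = \<nu> - m" "x / 3 + 1 = (\<nu> - m) / 3 + 2/3"
    by (simp_all add: x_def field_simps)
  have "fact (Suc m) = (real m + 1) * fact m" "(3::real) ^ (Suc m + 1) = 3 * 3 ^ (m + 1)"
    by simp_all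
  then have "(real m + 1) * moment_coeff \<nu> (Suc m)
      = (real m + 1) * (Gamma (x / 3) * (x * pochhammer (x + 1) m)
          / (3 * 3 ^ (m + 1) * ((real m + 1) * fact m)))"
    by (simp only: moment_coeff_def x_def pochhammer_rec)
  also have "\<dots> = (x / 3 * Gamma (x / 3)) * pochhammer (x + 1) m / (3 ^ (m + 1) * fact m)"
  proof -
    have "a * (G * (x * P) / (3 * T * (a * F))) = (x / 3 * G) * P / (T * F)" if "a \<noteq> 0"
      for a G P T F :: real
      using that by (simp add: field_simps)
    then show ?thesis by simp
  qed
  also have "x / 3 * Gamma (x / 3) = Gamma (x / 3 + 1)"
    using shift_div3_notin_nonpos_Ints[OF assms, of "Suc m"] by (simp add: x_def Gamma_plus1)
  finally show ?thesis
    using arg_shift by simp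
qed

lemma moment_coeff_Suc_add_2:
  assumes "\<nu> \<notin> \<int>"
  shows "(real (k + 2) + 1) * moment_coeff \<nu> (Suc (k + 2)) = moment_coeff (\<nu> + 2) (k + 2)
    - 2/3 * moment_coeff (\<nu> + 1) (k + 1) + 1/9 * moment_coeff \<nu> k"
proof -
  define a where "a = \<nu> - k"
  define G where "G = Gamma (a / 3)"
  have args: "\<nu> - real (k + 2) = a - 2" "(a - 2) / 3 + 2/3 = a / 3"
    by (simp_all add: a_def field_simps)
  have L: "(real (k + 2) + 1) * moment_coeff \<nu> (Suc (k + 2))
      = G * pochhammer (a - 2) (k + 2) / (3 ^ (k + 3) * fact (k + 2))"
    using moment_coeff_Suc[OF assms, of "k + 2", unfolded args] by (simp add: G_def power_add)
  have "\<nu> + 2 - real (k + 2) = a" "\<nu> + 1 - real (k + 1) = a"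
    by (simp_all add: a_def)
  then have R:
      "moment_coeff (\<nu> + 2) (k + 2) = G * pochhammer a (k + 2) / (3 ^ (k + 3) * fact (k + 2))"
      "moment_coeff (\<nu> + 1) (k + 1) = G * pochhammer a (k + 1) / (3 ^ (k + 2) * fact (k + 1))"
      "moment_coeff \<nu> k = G * pochhammer a k / (3 ^ (k + 1) * fact k)"
    by (simp_all add: moment_coeff_def G_def a_def power_add)
  have denominators: "fact (k + 2) = real (k + 2) * real (k + 1) * fact k"
      "fact (k + 1) = real (k + 1) * fact k"
      "(3::real) ^ (k + 3) = 9 * 3 ^ (k + 1)" "(3::real) ^ (k + 2) = 3 * 3 ^ (k + 1)"
    by (simp_all add: numeral_2_eq_2 power_add)
  have alg: "G * (P2 - 2 * n2 * P1 + n2 * n1 * P0) / (9 * T * (n2 * n1 * F))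
      = G * P2 / (9 * T * (n2 * n1 * F)) - 2/3 * (G * P1 / (3 * T * (n1 * F)))
        + 1/9 * (G * P0 / (T * F))"
    if "n1 \<noteq> 0" "n2 \<noteq> 0" "T \<noteq> 0" "F \<noteq> 0" for n1 n2 T F P0 P1 P2 :: real
    using that by (simp add: field_simps)
  show ?thesis
    unfolding L R pochhammer_minus_2_expand of_nat_mult denominators by (intro alg) simp_all
qed

lemma moment_coeff_rec:
  assumes "\<nu> \<notin> \<int>"
  shows "(real m + 1) * moment_coeff \<nu> (Suc m) = moment_coeff (\<nu> + 2) m
    - 2/3 * (if m = 0 then 0 else moment_coeff (\<nu> + 1) (m - 1))
    + 1/9 * (if m < 2 then 0 else moment_coeff \<nu> (m - 2))"
proof -
  consider "m = 0" | "m = 1" | k where "m = k + 2"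
    by (metis One_nat_def add_2_eq_Suc' not0_implies_Suc)
  then show ?thesis
  proof cases
    case 1
    then show ?thesis
      using moment_coeff_Suc[OF assms, of 0] by (simp add: moment_coeff_def add_divide_distrib)
  next
    case 2
    define G where "G = Gamma ((\<nu> + 1) / 3)"
    have "2 * moment_coeff \<nu> 2 = Gamma ((\<nu> - 1) / 3 + 2/3) * (\<nu> - 1) / 9"
      using moment_coeff_Suc[OF assms, of 1] by (simp add: numeral_2_eq_2)
    also have "(\<nu> - 1) / 3 + 2/3 = (\<nu> + 1) / 3" by (simp add: field_simps)
    finally have "2 * moment_coeff \<nu> 2 = G * (\<nu> - 1) / 9" by (simp add: G_def)
    moreover have "moment_coeff (\<nu> + 2) 1 = G * (\<nu> + 1) / 9" "moment_coeff (\<nu> + 1) 0 = G / 3"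
      by (simp_all add: moment_coeff_def G_def add.commute)
    ultimately show ?thesis
      using 2 by (simp add: numeral_2_eq_2 add.commute field_simps)
  next
    case 3
    then show ?thesis
      using moment_coeff_Suc_add_2[OF assms, of k] by simp
  qed
qed

definition moment_fps :: "real \<Rightarrow> real fps" where
  "moment_fps \<nu> = Abs_fps (moment_coeff \<nu>)"

lemma fps_deriv_moment_fps:
  assumes "\<nu> \<notin> \<int>"
  shows "fps_deriv (moment_fps \<nu>)
    = moment_fps (\<nu> + 2) - fps_const (2/3) * (fps_X * moment_fps (\<nu> + 1))
      + fps_const (1/9) * (fps_X ^ 2 * moment_fps \<nu>)"
proof (rule fps_ext)
  fix m
  show "fps_nth (fps_deriv (moment_fps \<nu>)) m
    = fps_nth (moment_fps (\<nu> + 2) - fps_const (2/3) * (fps_X * moment_fps (\<nu> + 1))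
        + fps_const (1/9) * (fps_X ^ 2 * moment_fps \<nu>)) m"
    using moment_coeff_rec[OF assms, of m]
    by (simp add: moment_fps_def fps_X_power_mult_nth add.commute)
qed

lemma moment_coeff_mod3:
  assumes "\<nu> \<notin> \<int>"
  shows "moment_coeff \<nu> (3 * k + r) = moment_coeff \<nu> r
    * pochhammer ((real r + 1 - \<nu>) / 3) k * pochhammer ((real r + 2 - \<nu>) / 3) k
    / (pochhammer ((real r + 1) / 3) k * pochhammer ((real r + 2) / 3) k
       * pochhammer ((real r + 3) / 3) k * 27 ^ k)"
proof -
  define w where "w = (\<nu> - r) / 3"
  have args: "\<nu> - real (3 * k + r) = 3 * (w - k)" "3 * (w - k) / 3 = w - k"
    "1/3 - w = (real r + 1 - \<nu>) / 3" "2/3 - w = (real r + 2 - \<nu>) / 3"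
    by (simp_all add: w_def field_simps)
  have "3 * (w - k) + of_nat (3 * k) = \<nu> - r"
    by (simp add: w_def field_simps)
  then have "pochhammer (3 * (w - k)) (3 * k + r)
      = pochhammer (3 * (w - k)) (3 * k) * pochhammer (\<nu> - r) r"
    using pochhammer_product'[of "3 * (w - k)" "3 * k" r] by simp
  also have "pochhammer (3 * (w - k)) (3 * k)
      = 27 ^ k * pochhammer (w - k) k
        * pochhammer ((real r + 1 - \<nu>) / 3) k * pochhammer ((real r + 2 - \<nu>) / 3) k"
    unfolding pochhammer_triple_reflect args ..
  finally have poch: "pochhammer (3 * (w - k)) (3 * k + r) = 27 ^ k * pochhammer (w - k) k
      * pochhammer ((real r + 1 - \<nu>) / 3) k * pochhammer ((real r + 2 - \<nu>) / 3) k
      * pochhammer (\<nu> - r) r" .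
  have "w - k \<notin> \<int>\<^sub>\<le>\<^sub>0"
    using shift_div3_notin_nonpos_Ints[OF assms, of "3 * k + r"] by (simp add: w_def field_simps)
  then have Gamma: "Gamma (w - k) * pochhammer (w - k) k = Gamma w"
    by (simp add: pochhammer_Gamma Gamma_eq_zero_iff)
  have pos: "pochhammer ((real r + j) / 3) k > 0" if "j > 0" for j :: real
    using that by (intro pochhammer_pos) simp
  have "(3::real) ^ (3 * k + r + 1) = 27 ^ k * 3 ^ (r + 1)"
    by (simp add: power_add power_mult)
  then show ?thesis
    unfolding moment_coeff_def args(1,2) poch fact_mult3_add w_def [symmetric] Gamma [symmetric]
    using pos[of 1] pos[of 2] pos[of 3] by (simp add: field_simps)
qed

lemma moment_coeff_times_power_mod3:
  assumes "\<nu> \<notin> \<int>"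
  shows "moment_coeff \<nu> (3 * k) * t ^ (3 * k)
      = moment_coeff \<nu> 0 * hyp2F2_term ((1 - \<nu>) / 3) ((2 - \<nu>) / 3) (1/3) (2/3) (t^3 / 27) k"
    and "moment_coeff \<nu> (3 * k + 1) * t ^ (3 * k + 1)
      = moment_coeff \<nu> 1 * t * hyp2F2_term ((2 - \<nu>) / 3) ((3 - \<nu>) / 3) (2/3) (4/3) (t^3 / 27) k"
    and "moment_coeff \<nu> (3 * k + 2) * t ^ (3 * k + 2)
      = moment_coeff \<nu> 2 * t^2 * hyp2F2_term ((3 - \<nu>) / 3) ((4 - \<nu>) / 3) (4/3) (5/3) (t^3 / 27) k"
proof -
  have powers: "t ^ (3 * k) = (t^3)^k" "t ^ (3 * k + 1) = t * (t^3)^k"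
    "t ^ (3 * k + 2) = t^2 * (t^3)^k" "(t^3 / 27)^k = (t^3)^k / 27^k"
    by (simp_all add: power_add power_divide power2_eq_square flip: power_mult)
  \<comment> \<open>The factor pochhammer 1 k = fact k sits at a different place in each residue class.\<close>
  have alg: "c * P1 * P2 / (Q1 * Q2 * F * K) * T = c * (P1 * P2 / (Q1 * Q2) * (T / K) / F)"
    "c * P1 * P2 / (Q1 * F * Q2 * K) * (s * T) = c * s * (P1 * P2 / (Q1 * Q2) * (T / K) / F)"
    "c * P1 * P2 / (F * Q1 * Q2 * K) * (s * T) = c * s * (P1 * P2 / (Q1 * Q2) * (T / K) / F)"
    for c P1 P2 Q1 Q2 F K s T :: real
    by (simp_all add: divide_inverse inverse_mult_distrib ac_simps)
  have c0: "moment_coeff \<nu> (3 * k) = moment_coeff \<nu> 0 * pochhammer ((1 - \<nu>) / 3) k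
      * pochhammer ((2 - \<nu>) / 3) k / (pochhammer (1/3) k * pochhammer (2/3) k * fact k * 27 ^ k)"
    using moment_coeff_mod3[OF assms, of k 0] by (simp add: pochhammer_fact)
  show "moment_coeff \<nu> (3 * k) * t ^ (3 * k)
      = moment_coeff \<nu> 0 * hyp2F2_term ((1 - \<nu>) / 3) ((2 - \<nu>) / 3) (1/3) (2/3) (t^3 / 27) k"
    unfolding hyp2F2_term_def powers c0 by (rule alg(1))
  have c1: "moment_coeff \<nu> (3 * k + 1) = moment_coeff \<nu> 1 * pochhammer ((2 - \<nu>) / 3) k
      * pochhammer ((3 - \<nu>) / 3) k / (pochhammer (2/3) k * fact k * pochhammer (4/3) k * 27 ^ k)"
    using moment_coeff_mod3[OF assms, of k 1] by (simp add: pochhammer_fact)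
  show "moment_coeff \<nu> (3 * k + 1) * t ^ (3 * k + 1)
      = moment_coeff \<nu> 1 * t * hyp2F2_term ((2 - \<nu>) / 3) ((3 - \<nu>) / 3) (2/3) (4/3) (t^3 / 27) k"
    unfolding hyp2F2_term_def powers c1 by (rule alg(2))
  have c2: "moment_coeff \<nu> (3 * k + 2) = moment_coeff \<nu> 2 * pochhammer ((3 - \<nu>) / 3) k
      * pochhammer ((4 - \<nu>) / 3) k / (fact k * pochhammer (4/3) k * pochhammer (5/3) k * 27 ^ k)"
    using moment_coeff_mod3[OF assms, of k 2] by (simp add: pochhammer_fact)
  show "moment_coeff \<nu> (3 * k + 2) * t ^ (3 * k + 2)
      = moment_coeff \<nu> 2 * t^2 * hyp2F2_term ((3 - \<nu>) / 3) ((4 - \<nu>) / 3) (4/3) (5/3) (t^3 / 27) k"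
    unfolding hyp2F2_term_def powers c2 by (rule alg(3))
qed

lemma sums_moment_coeff:
  assumes "\<nu> \<notin> \<int>"
  shows "(\<lambda>m. moment_coeff \<nu> m * t ^ m) sums
    (moment_coeff \<nu> 0 * hyp2F2 ((1 - \<nu>) / 3) ((2 - \<nu>) / 3) (1/3) (2/3) (t^3 / 27)
     + moment_coeff \<nu> 1 * t * hyp2F2 ((2 - \<nu>) / 3) ((3 - \<nu>) / 3) (2/3) (4/3) (t^3 / 27)
     + moment_coeff \<nu> 2 * t^2 * hyp2F2 ((3 - \<nu>) / 3) ((4 - \<nu>) / 3) (4/3) (5/3) (t^3 / 27))"
  by (rule sums_mod3; unfold moment_coeff_times_power_mod3[OF assms];
      intro sums_mult hyp2F2_term_sums) simp_all

lemma summable_norm_moment_coeff: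
  assumes "\<nu> \<notin> \<int>"
  shows "summable (\<lambda>m. norm (moment_coeff \<nu> m * t ^ m))"
proof -
  have "summable (\<lambda>k. norm (moment_coeff \<nu> (3 * k) * t ^ (3 * k)))"
    "summable (\<lambda>k. norm (moment_coeff \<nu> (3 * k + 1) * t ^ (3 * k + 1)))"
    "summable (\<lambda>k. norm (moment_coeff \<nu> (3 * k + 2) * t ^ (3 * k + 2)))"
    unfolding moment_coeff_times_power_mod3[OF assms] norm_mult
    by (intro summable_mult summable_norm_hyp2F2_term; simp)+
  then show ?thesis
    by (intro sums_summable[OF sums_mod3[of "\<lambda>m. norm (moment_coeff \<nu> m * t ^ m)"]])
      (erule summable_sums)+
qed

lemma moment_coeff_half_integer:
  "moment_coeff (real n + 1/2) 0 = Gamma (real n / 3 + 1/6) / 3"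
  "moment_coeff (real n + 1/2) 1 = Gamma (real n / 3 + 5/6) / 3"
  "moment_coeff (real n + 1/2) 2 = (2 * real n - 1) / 36 * Gamma (real n / 3 + 1/2)"
proof -
  have not_nonpos: "(real n + 1/2 - of_nat m) / 3 \<notin> \<int>\<^sub>\<le>\<^sub>0" for m
    by (rule shift_div3_notin_nonpos_Ints[OF half_integer_not_Ints])
  show "moment_coeff (real n + 1/2) 0 = Gamma (real n / 3 + 1/6) / 3"
    by (simp add: moment_coeff_def add_divide_distrib)
  have "Gamma (real n / 3 + 5/6) = (real n - 1/2) / 3 * Gamma ((real n - 1/2) / 3)"
    using Gamma_plus1[OF not_nonpos[of 1]] by (simp add: field_simps)
  then show "moment_coeff (real n + 1/2) 1 = Gamma (real n / 3 + 5/6) / 3"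
    by (simp add: moment_coeff_def field_simps)
  have Gamma_shift: "Gamma (real n / 3 + 1/2) = (real n - 3/2) / 3 * Gamma ((real n - 3/2) / 3)"
    using Gamma_plus1[OF not_nonpos[of 2]] by (simp add: field_simps)
  show "moment_coeff (real n + 1/2) 2 = (2 * real n - 1) / 36 * Gamma (real n / 3 + 1/2)"
  proof -
    have eqs: "real n + 1/2 - real 2 = real n - 3/2"
        "pochhammer (real n - 3/2) 2 = (real n - 3/2) * (real n - 1/2)"
      by (simp_all add: pochhammer_rec numeral_2_eq_2)
    show ?thesis
      unfolding moment_coeff_def Gamma_shift eqs by (simp add: field_simps)
  qed
qed

lemma fps_deriv_exp_cubic_times_moment_fps:
  assumes "\<nu> \<notin> \<int>"
  defines "E \<equiv> fps_exp (-1/27) oo fps_X ^ 3"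
  shows "fps_deriv (E * moment_fps \<nu>)
    = E * moment_fps (\<nu> + 2) - fps_const (2/3) * (fps_X * (E * moment_fps (\<nu> + 1)))"
proof -
  have E': "fps_deriv E = fps_const (- (1/9)) * fps_X ^ 2 * E"
    unfolding E_def by (simp add: fps_deriv_fps_exp_compose_X_power)
  have "E * (R2 - c1 * (X * R1) + fps_const c * (X^2 * R)) + fps_const (- c) * X^2 * E * R
      = E * R2 - c1 * (X * (E * R1))" for R R1 R2 c1 X :: "real fps" and c :: real
    by (simp add: algebra_simps flip: fps_const_neg)
  then show ?thesis
    unfolding fps_deriv_mult fps_deriv_moment_fps[OF assms(1)] E' .
qed

lemma sums_exp_cubic_times_moment_fps:
  assumes "\<nu> \<notin> \<int>"
  shows "(\<lambda>p. fps_nth ((fps_exp (-1/27) oo fps_X ^ 3) * moment_fps \<nu>) p * t ^ p) sums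
    (exp (- (t^3 / 27)) *
     (moment_coeff \<nu> 0 * hyp2F2 ((1 - \<nu>) / 3) ((2 - \<nu>) / 3) (1/3) (2/3) (t^3 / 27)
      + moment_coeff \<nu> 1 * t * hyp2F2 ((2 - \<nu>) / 3) ((3 - \<nu>) / 3) (2/3) (4/3) (t^3 / 27)
      + moment_coeff \<nu> 2 * t^2 * hyp2F2 ((3 - \<nu>) / 3) ((4 - \<nu>) / 3) (4/3) (5/3) (t^3 / 27)))"
proof -
  have E: "(\<lambda>p. fps_nth (fps_exp (-1/27) oo fps_X ^ 3) p * t ^ p) sums exp (- (t^3 / 27))"
    using sums_fps_exp_compose_X_power[of 3 "-1/27" t] by simp
  have "summable (\<lambda>p. norm (fps_nth (fps_exp (-1/27) oo fps_X ^ 3) p * t ^ p))"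
    using sums_norm_fps_exp_compose_X_power[of 3 "-1/27" t] by (rule sums_summable) simp
  from sums_fps_mult[OF this, of "moment_fps \<nu>"] show ?thesis
    using summable_norm_moment_coeff[OF assms] sums_unique[OF E]
      sums_unique[OF sums_moment_coeff[OF assms]]
    by (simp add: moment_fps_def)
qed

lemma sums_exp_cubic_times_moment_fps_half_integer:
  fixes \<tau> :: real and n :: nat
  shows "(\<lambda>p. fps_nth ((fps_exp (-1/27) oo fps_X ^ 3) * moment_fps (real n + 1/2)) p * \<tau> ^ p) sums
     ( ( Gamma (real n / 3 + 1/6) / 3
           * hyp2F2 (1/6 - real n / 3) (1/2 - real n / 3) (1/3) (2/3) (\<tau>^3 / 27)
       + \<tau> * Gamma (real n / 3 + 5/6) / 3
           * hyp2F2 (1/2 - real n / 3) (5/6 - real n / 3) (2/3) (4/3) (\<tau>^3 / 27)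
       + (2 * real n - 1) * \<tau>^2 / 36 * Gamma (real n / 3 + 1/2)
           * hyp2F2 (5/6 - real n / 3) (7/6 - real n / 3) (4/3) (5/3) (\<tau>^3 / 27) )
       * exp (- (\<tau>^3 / 27)) )"
proof -
  have args: "(1 - (real n + 1/2)) / 3 = 1/6 - real n / 3"
    "(2 - (real n + 1/2)) / 3 = 1/2 - real n / 3" "(3 - (real n + 1/2)) / 3 = 5/6 - real n / 3"
    "(4 - (real n + 1/2)) / 3 = 7/6 - real n / 3"
    by (simp_all add: field_simps)
  show ?thesis
    using sums_exp_cubic_times_moment_fps[OF half_integer_not_Ints, of n \<tau>]
    unfolding args moment_coeff_half_integer
    by (simp add: algebra_simps)
qed

section \<open>The left-hand side as a power series\<close>

definition exp_tilt_fps :: "real \<Rightarrow> real fps" where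
  "exp_tilt_fps x = fps_exp (x^4) * (fps_exp (- (x^2 / 3)) oo fps_X ^ 2)"

lemma fps_deriv_exp_tilt_fps:
  "fps_deriv (exp_tilt_fps x)
    = fps_const (x^4) * exp_tilt_fps x - fps_const (2 * x^2 / 3) * (fps_X * exp_tilt_fps x)"
  unfolding exp_tilt_fps_def fps_deriv_mult
  by (simp add: fps_deriv_fps_exp_compose_X_power algebra_simps flip: fps_const_neg)

lemma exp_tilt_fps_nth_Suc:
  "(real p + 1) * fps_nth (exp_tilt_fps x) (Suc p) = x^4 * fps_nth (exp_tilt_fps x) p
    - 2 * x^2 / 3 * (if p = 0 then 0 else fps_nth (exp_tilt_fps x) (p - 1))"
  using arg_cong[OF fps_deriv_exp_tilt_fps, of "\<lambda>f. fps_nth f p"] by (simp add: add.commute)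

lemma sums_norm_exp_tilt_factors:
  fixes x t :: real
  shows "(\<lambda>i. norm (fps_nth (fps_exp (x^4)) i * t^i)) sums exp (x^4 * \<bar>t\<bar>)"
    and "(\<lambda>j. norm (fps_nth (fps_exp (- (x^2 / 3)) oo fps_X ^ 2) j * t^j)) sums exp (x^2 / 3 * t^2)"
  using sums_norm_fps_exp_compose_X_power[of 1 "x^4" t]
    sums_norm_fps_exp_compose_X_power[of 2 "- (x^2 / 3)" t]
  by simp_all

lemma sums_exp_tilt_fps:
  fixes x t :: real
  shows "(\<lambda>p. fps_nth (exp_tilt_fps x) p * t^p) sums (exp (x^4 * t) * exp (- (x^2 / 3) * t^2))"
proof -
  have "(\<lambda>i. fps_nth (fps_exp (x^4)) i * t^i) sums exp (x^4 * t)"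
    "(\<lambda>j. fps_nth (fps_exp (- (x^2 / 3)) oo fps_X ^ 2) j * t^j) sums exp (- (x^2 / 3) * t^2)"
    using sums_fps_exp_compose_X_power[of 1 "x^4" t]
      sums_fps_exp_compose_X_power[of 2 "- (x^2 / 3)" t]
    by simp_all
  then show ?thesis
    using sums_fps_mult[OF sums_summable sums_summable, OF sums_norm_exp_tilt_factors]
    by (simp add: exp_tilt_fps_def sums_iff)
qed

lemma norm_sum_exp_tilt_fps_le:
  fixes x t :: real
  assumes "finite P"
  shows "\<bar>\<Sum>p\<in>P. fps_nth (exp_tilt_fps x) p * t^p\<bar> \<le> exp (x^4 * \<bar>t\<bar>) * exp (x^2 / 3 * t^2)"
proof -
  note factors = sums_norm_exp_tilt_factors[of x t]
  show ?thesis
    using norm_sum_fps_mult_le[OF sums_summable[OF factors(1)] sums_summable[OF factors(2)] assms]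
    unfolding exp_tilt_fps_def factors[THEN sums_unique, symmetric] by simp
qed

lemma continuous_on_exp_tilt_fps_nth: "continuous_on UNIV (\<lambda>x. fps_nth (exp_tilt_fps x) p)"
  unfolding exp_tilt_fps_def fps_mult_nth
proof (intro continuous_on_sum)
  fix i
  show "continuous_on UNIV
      (\<lambda>x::real. fps_nth (fps_exp (x^4)) i * fps_nth (fps_exp (- (x^2 / 3)) oo fps_X ^ 2) (p - i))"
    by (cases "2 dvd (p - i)";
        simp add: fps_nth_fps_exp_compose_X_power; intro continuous_intros; simp)
qed

lemma cubic_mixed_terms_le:
  fixes y T :: real
  assumes y: "y \<ge> 0" and T: "T \<ge> 0"
  shows "T * y^2 + T^2 * y / 3 \<le> y^3 / 2 + 18 * T^3"
proof (cases "y \<le> 4 * T")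
  case True
  have "y^2 \<le> (4 * T)^2" using True y by (intro power_mono) auto
  from mult_left_mono[OF this T] have "T * y^2 \<le> 16 * T^3"
    by (simp add: power2_eq_square power3_eq_cube)
  moreover from mult_left_mono[OF True, of "T^2"] have "T^2 * y \<le> 4 * T^3"
    by (simp add: power2_eq_square power3_eq_cube)
  moreover have "y^3 \<ge> 0" "T^3 \<ge> 0" using y T by simp_all
  ultimately show ?thesis by linarith
next
  case False
  then have "T \<le> y / 4" by simp
  from mult_right_mono[OF this, of "y^2"] have "T * y^2 \<le> y^3 / 4"
    by (simp add: power2_eq_square power3_eq_cube)
  moreover have "T^2 \<le> (y / 4)^2" using \<open>T \<le> y / 4\<close> T by (intro power_mono) auto
  from mult_right_mono[OF this y] have "T^2 * y \<le> y^3 / 16"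
    by (simp add: power2_eq_square power3_eq_cube)
  moreover have "y^3 \<ge> 0" "T^3 \<ge> 0" using y T by simp_all
  ultimately show ?thesis by linarith
qed

lemma exp_tilt_partial_sum_dominated:
  fixes x t :: real
  assumes "finite P"
  shows "\<bar>x^(2*n) * exp (- (x^6)) * (\<Sum>p\<in>P. fps_nth (exp_tilt_fps x) p * t^p)\<bar>
    \<le> exp (18 * \<bar>t\<bar>^3) * (x^(2*n) * exp (- (1/2) * x^6))"
proof -
  have "\<bar>t\<bar> * (x^2)^2 + \<bar>t\<bar>^2 * x^2 / 3 \<le> (x^2)^3 / 2 + 18 * \<bar>t\<bar>^3"
    by (rule cubic_mixed_terms_le) auto
  have "exp (- (x^6)) * \<bar>\<Sum>p\<in>P. fps_nth (exp_tilt_fps x) p * t^p\<bar>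
      \<le> exp (- (x^6)) * (exp (x^4 * \<bar>t\<bar>) * exp (x^2 / 3 * t^2))"
    by (rule mult_left_mono[OF norm_sum_exp_tilt_fps_le[OF assms]]) simp
  also have "\<dots> \<le> exp (18 * \<bar>t\<bar>^3) * exp (- (1/2) * x^6)"
    using \<open>\<bar>t\<bar> * (x^2)^2 + \<bar>t\<bar>^2 * x^2 / 3 \<le> (x^2)^3 / 2 + 18 * \<bar>t\<bar>^3\<close>
    by (simp add: algebra_simps flip: exp_add power_mult)
  finally have "exp (- (x^6)) * \<bar>\<Sum>p\<in>P. fps_nth (exp_tilt_fps x) p * t^p\<bar>
      \<le> exp (18 * \<bar>t\<bar>^3) * exp (- (1/2) * x^6)" .
  moreover have "0 \<le> x^(2*n)" by (simp add: power_mult)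
  ultimately have "x^(2*n) * (exp (- (x^6)) * \<bar>\<Sum>p\<in>P. fps_nth (exp_tilt_fps x) p * t^p\<bar>)
      \<le> x^(2*n) * (exp (18 * \<bar>t\<bar>^3) * exp (- (1/2) * x^6))"
    by (rule mult_left_mono)
  with \<open>0 \<le> x^(2*n)\<close> show ?thesis
    by (simp add: abs_mult mult_ac)
qed

lemma integrable_exp_tilt_partial_sum:
  fixes t :: real
  assumes "finite P"
  shows "(\<lambda>x. x^(2*n) * exp (- (x^6)) * (\<Sum>p\<in>P. fps_nth (exp_tilt_fps x) p * t^p))
    integrable_on UNIV"
proof (rule integrable_on_all_intervals_integrable_bound)
  show "(\<lambda>x. exp (18 * \<bar>t\<bar>^3) * (x^(2*n) * exp (- (1/2) * x^6))) integrable_on UNIV"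
    using has_integral_power_exp_neg_sextic[of "1/2" n] by (intro integrable_on_mult_right) auto
  show "norm (x^(2*n) * exp (- (x^6)) * (\<Sum>p\<in>P. fps_nth (exp_tilt_fps x) p * t^p))
      \<le> exp (18 * \<bar>t\<bar>^3) * (x^(2*n) * exp (- (1/2) * x^6))" for x
    using exp_tilt_partial_sum_dominated[OF assms] by simp
  show "(\<lambda>x. if x \<in> UNIV
      then x^(2*n) * exp (- (x^6)) * (\<Sum>p\<in>P. fps_nth (exp_tilt_fps x) p * t^p) else 0)
      integrable_on cbox a b" for a b
  proof -
    have "continuous_on {a..b}
        (\<lambda>x. x^(2*n) * exp (- (x^6)) * (\<Sum>p\<in>P. fps_nth (exp_tilt_fps x) p * t^p))"
      by (intro continuous_intros continuous_on_subset[OF continuous_on_exp_tilt_fps_nth]) auto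
    then show ?thesis by (simp add: integrable_continuous_real)
  qed
qed

definition tilted_moment :: "nat \<Rightarrow> nat \<Rightarrow> real" where
  "tilted_moment n p = integral UNIV (\<lambda>x. x^(2*n) * exp (- (x^6)) * fps_nth (exp_tilt_fps x) p)"

lemma integrable_tilted_moment:
  "(\<lambda>x. x^(2*n) * exp (- (x^6)) * fps_nth (exp_tilt_fps x) p) integrable_on UNIV"
  using integrable_exp_tilt_partial_sum[of "{p}" n 1] by simp

lemma tilted_moment_0: "tilted_moment n 0 = Gamma ((2 * real n + 1) / 6) / 3"
  using has_integral_power_exp_neg_sextic[of 1 n]
  by (simp add: tilted_moment_def exp_tilt_fps_def integral_unique)

lemma tilted_moment_Suc:
  "(real p + 1) * tilted_moment n (Suc p)
    = tilted_moment (n + 2) p - 2/3 * (if p = 0 then 0 else tilted_moment (n + 1) (p - 1))"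
proof -
  define g where "g q k x = x^(2*q) * exp (- (x^6)) * fps_nth (exp_tilt_fps x) k"
    for q k and x :: real
  have "x^(2*n) * exp (- (x^6)) * ((real p + 1) * fps_nth (exp_tilt_fps x) (Suc p))
      = g (n + 2) p x - 2/3 * (if p = 0 then 0 else g (n + 1) (p - 1) x)" for x
  proof -
    have pow: "x^(2*(n+2)) = x^(2*n) * x^4" "x^(2*(n+1)) = x^(2*n) * x^2"
      by (simp_all add: power_add eval_nat_numeral)
    show ?thesis
      unfolding exp_tilt_fps_nth_Suc g_def pow by (cases "p = 0") (simp_all add: algebra_simps)
  qed
  then have "(real p + 1) * tilted_moment n (Suc p)
      = integral UNIV (\<lambda>x. g (n + 2) p x - 2/3 * (if p = 0 then 0 else g (n + 1) (p - 1) x))"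
    unfolding tilted_moment_def by (simp flip: integral_mult_right add: mult_ac)
  also have "\<dots>
      = tilted_moment (n + 2) p - 2/3 * (if p = 0 then 0 else tilted_moment (n + 1) (p - 1))"
    using integrable_tilted_moment[of "n + 2" p] integrable_tilted_moment[of "n + 1" "p - 1"]
    by (cases "p = 0")
      (simp_all add: tilted_moment_def g_def integral_diff integrable_on_mult_right)
  finally show ?thesis .
qed

lemma fps_deriv_tilted_moment_fps:
  "fps_deriv (Abs_fps (tilted_moment n))
    = Abs_fps (tilted_moment (n + 2)) - fps_const (2/3) * (fps_X * Abs_fps (tilted_moment (n + 1)))"
proof (rule fps_ext)
  fix p
  show "fps_nth (fps_deriv (Abs_fps (tilted_moment n))) p = fps_nth (Abs_fps (tilted_moment (n + 2))
    - fps_const (2/3) * (fps_X * Abs_fps (tilted_moment (n + 1)))) p"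
    using tilted_moment_Suc[of p n] by (simp add: add.commute)
qed

lemma sums_tilted_moment:
  fixes \<tau> :: real and n :: nat
  defines "f \<equiv> \<lambda>x. x^(2*n) * exp (- (x^6 - \<tau> * x^4 + \<tau>^2 * x^2 / 3))"
  shows "f integrable_on UNIV" and "(\<lambda>p. tilted_moment n p * \<tau>^p) sums integral UNIV f"
proof -
  define S where "S k x = x^(2*n) * exp (- (x^6)) * (\<Sum>p<k. fps_nth (exp_tilt_fps x) p * \<tau>^p)"
    for k x
  define h where "h x = exp (18 * \<bar>\<tau>\<bar>^3) * (x^(2*n) * exp (- (1/2) * x^6))" for x :: real
  have "S k integrable_on UNIV" for k
    unfolding S_def by (rule integrable_exp_tilt_partial_sum) simp
  moreover have "h integrable_on UNIV"
    unfolding h_def using has_integral_power_exp_neg_sextic[of "1/2" n]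
    by (intro integrable_on_mult_right) auto
  moreover have "norm (S k x) \<le> h x" for k x
    unfolding S_def h_def using exp_tilt_partial_sum_dominated[of "{..<k}"] by simp
  moreover have "(\<lambda>k. S k x) \<longlonglongrightarrow> f x" for x
  proof -
    have "exp (- (x^6)) * (exp (x^4 * \<tau>) * exp (- (x^2 / 3) * \<tau>^2))
        = exp (- (x^6 - \<tau> * x^4 + \<tau>^2 * x^2 / 3))"
      by (simp add: algebra_simps flip: exp_add)
    then show ?thesis
      using sums_exp_tilt_fps[of x \<tau>] unfolding S_def f_def sums_def
      by (auto intro!: tendsto_eq_intros simp: mult.assoc)
  qed
  ultimately have "f integrable_on UNIV" "(\<lambda>k. integral UNIV (S k)) \<longlonglongrightarrow> integral UNIV f"
    using dominated_convergence[of S UNIV h f] by auto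
  moreover have "integral UNIV (S k) = (\<Sum>p<k. tilted_moment n p * \<tau>^p)" for k
  proof -
    have "S k = (\<lambda>x. \<Sum>p<k. x^(2*n) * exp (- (x^6)) * fps_nth (exp_tilt_fps x) p * \<tau>^p)"
      by (rule ext) (simp add: S_def sum_distrib_left mult_ac)
    then show ?thesis
      by (simp add: integral_sum integrable_on_mult_left integrable_tilted_moment tilted_moment_def)
  qed
  ultimately show "f integrable_on UNIV" "(\<lambda>p. tilted_moment n p * \<tau>^p) sums integral UNIV f"
    by (simp_all add: sums_def)
qed

section \<open>Comparison of the two series\<close>

lemma tilted_moment_fps_eq:
  "Abs_fps (tilted_moment n) = (fps_exp (-1/27) oo fps_X ^ 3) * moment_fps (real n + 1/2)"
proof -
  define E where "E = fps_exp (-1/27 :: real) oo fps_X ^ 3"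
  have "(\<lambda>n. Abs_fps (tilted_moment n)) = (\<lambda>n. E * moment_fps (real n + 1/2))"
  proof (rule fps_family_eqI)
    show "fps_deriv (E * moment_fps (real n + 1/2))
        = E * moment_fps (real (n + 2) + 1/2)
          - fps_const (2/3) * (fps_X * (E * moment_fps (real (n + 1) + 1/2)))" for n
    proof -
      have "real (n + 2) + 1/2 = real n + 1/2 + 2" "real (n + 1) + 1/2 = real n + 1/2 + 1"
        by simp_all
      then show ?thesis
        using fps_deriv_exp_cubic_times_moment_fps[OF half_integer_not_Ints, of n]
        by (simp only: E_def)
    qed
    show "fps_nth (Abs_fps (tilted_moment n)) 0 = fps_nth (E * moment_fps (real n + 1/2)) 0" for n
    proof -
      have "fps_nth (E * moment_fps (real n + 1/2)) 0 = moment_coeff (real n + 1/2) 0"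
        by (simp add: E_def moment_fps_def)
      moreover have "(2 * real n + 1) / 6 = real n / 3 + 1/6" by simp
      then have "fps_nth (Abs_fps (tilted_moment n)) 0 = Gamma (real n / 3 + 1/6) / 3"
        unfolding fps_nth_Abs_fps tilted_moment_0 by (rule arg_cong)
      ultimately show ?thesis
        by (simp add: moment_coeff_half_integer)
    qed
  qed (rule fps_deriv_tilted_moment_fps)
  then show ?thesis
    by (simp add: E_def fun_eq_iff)
qed

theorem lemma6p9:
  fixes \<tau> :: real and n :: nat
  shows "((\<lambda>x::real. x ^ (2*n) * exp (- (x^6 - \<tau> * x^4 + \<tau>^2 * x^2 / 3))) has_integral
     ( ( Gamma (real n / 3 + 1/6) / 3
           * hyp2F2 (1/6 - real n / 3) (1/2 - real n / 3) (1/3) (2/3) (\<tau>^3 / 27)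
       + \<tau> * Gamma (real n / 3 + 5/6) / 3
           * hyp2F2 (1/2 - real n / 3) (5/6 - real n / 3) (2/3) (4/3) (\<tau>^3 / 27)
       + (2 * real n - 1) * \<tau>^2 / 36 * Gamma (real n / 3 + 1/2)
           * hyp2F2 (5/6 - real n / 3) (7/6 - real n / 3) (4/3) (5/3) (\<tau>^3 / 27) )
       * exp (- (\<tau>^3 / 27)) )) UNIV"
proof -
  have "tilted_moment n p
      = fps_nth ((fps_exp (-1/27) oo fps_X ^ 3) * moment_fps (real n + 1/2)) p" for p
    unfolding tilted_moment_fps_eq [symmetric] by simp
  note series = sums_exp_cubic_times_moment_fps_half_integer[of n \<tau>, folded this]
  show ?thesis
    using integrable_integral[OF sums_tilted_moment(1)[of n \<tau>]]
      sums_unique2[OF sums_tilted_moment(2) series]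
    by simp
qed

end
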